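(* Let $\lambda$ and $\rho$ be two function quasi-norms over the same $\sigma$-finite measure space $(\Omega,\Sigma,\mu)$, and suppose $\rho$ has the weak Fatou property. Then $\rho$ dominates $\lambda$ if and only if $\{f\in L_0^+(\mu):\rho(f)<\infty\}\subseteq\{f\in L_0^+(\mu):\lambda(f)<\infty\}$.
   Context: $L_0^+(\mu)$: measurable functions $\Omega\to[0,\infty]$ modulo a.e. equality. A function quasi-norm is $\rho\colon L_0^+(\mu)\to[0,\infty]$ with (F1) $\rho(tf)=t\rho(f)$, $t\ge0$; (F2) $f\le g$ a.e. $\Rightarrow\rho(f)\le\rho(g)$; (F3) $\rho(\chi_E)<\infty$ if $\mu(E)<\infty$; (F4) for all $E$ with $\mu(E)<\infty$ and $\varepsilon>0$ there is $\delta>0$ with $\mu(A)\le\varepsilon$ whenever $A\subseteq E$ measurable and $\rho(\chi_A)\le\delta$; (F5) $\rho(f+g)\le\kappa(\rho(f)+\rho(g))$ for some constant $\kappa$. $\rho$ dominates $\lambda$ if there is $C$ with $\lambda(f)\le C\rho(f)$ for all $f\in L_0^+(\mu)$. $\rho$ has the weak Fatou property if $\rho(\lim_nf_n)<\infty$ for every non-decreasing $(f_n)$ in $L_0^+(\mu)$ with $\lim_n\rho(f_n)<\infty$. *)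

theory Defs
  imports "HOL-Analysis.Analysis"
begin

text \<open>L_0^+(mu) is represented by borel-measurable functions into ennreal = [0,\<infinity>];
  a.e.-invariance follows from monotonicity (F2) stated a.e.\<close>

definition function_quasi_norm :: "'a measure \<Rightarrow> (('a \<Rightarrow> ennreal) \<Rightarrow> ennreal) \<Rightarrow> bool" where
  "function_quasi_norm M \<rho> \<longleftrightarrow>
     (\<forall>f \<in> borel_measurable M. \<forall>t::real. t \<ge> 0 \<longrightarrow>
         \<rho> (\<lambda>x. ennreal t * f x) = ennreal t * \<rho> f) \<and>
     (\<forall>f \<in> borel_measurable M. \<forall>g \<in> borel_measurable M.
         (AE x in M. f x \<le> g x) \<longrightarrow> \<rho> f \<le> \<rho> g) \<and>
     (\<forall>E \<in> sets M. emeasure M E < \<infinity> \<longrightarrow> \<rho> (indicator E) < \<infinity>) \<and>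
     (\<forall>E \<in> sets M. emeasure M E < \<infinity> \<longrightarrow> (\<forall>\<epsilon>::real. \<epsilon> > 0 \<longrightarrow>
         (\<exists>\<delta>::real. \<delta> > 0 \<and> (\<forall>A \<in> sets M. A \<subseteq> E \<longrightarrow>
             \<rho> (indicator A) \<le> ennreal \<delta> \<longrightarrow> emeasure M A \<le> ennreal \<epsilon>)))) \<and>
     (\<exists>\<kappa>::real. \<forall>f \<in> borel_measurable M. \<forall>g \<in> borel_measurable M.
         \<rho> (\<lambda>x. f x + g x) \<le> ennreal \<kappa> * (\<rho> f + \<rho> g))"

definition dominates :: "'a measure \<Rightarrow> (('a \<Rightarrow> ennreal) \<Rightarrow> ennreal) \<Rightarrow> (('a \<Rightarrow> ennreal) \<Rightarrow> ennreal) \<Rightarrow> bool" where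
  "dominates M \<rho> lam \<longleftrightarrow> (\<exists>C::real. \<forall>f \<in> borel_measurable M. lam f \<le> ennreal C * \<rho> f)"

text \<open>Non-decreasing in L_0^+: a.e. non-decreasing; its limit is the (a.e.) pointwise supremum.\<close>
definition weak_Fatou :: "'a measure \<Rightarrow> (('a \<Rightarrow> ennreal) \<Rightarrow> ennreal) \<Rightarrow> bool" where
  "weak_Fatou M \<rho> \<longleftrightarrow>
     (\<forall>f :: nat \<Rightarrow> 'a \<Rightarrow> ennreal. (\<forall>n. f n \<in> borel_measurable M) \<longrightarrow>
        (\<forall>n. AE x in M. f n x \<le> f (Suc n) x) \<longrightarrow>
        (SUP n. \<rho> (f n)) < \<infinity> \<longrightarrow> \<rho> (\<lambda>x. SUP n. f n x) < \<infinity>)"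

end

theory Submission
  imports Defs
begin

text \<open>For sufficiency it is enough, by homogeneity, to bound \<open>lam\<close> on the
  \<open>\<rho>\<close>-unit ball. If it were unbounded there, pick \<open>h\<^sub>n\<close> with \<open>\<rho>(h\<^sub>n) \<le> 1\<close> and
  \<open>lam(h\<^sub>n) > n(2\<kappa>)\<^sup>n\<close>, where \<open>\<kappa> \<ge> 1\<close> is the quasi-triangle constant of \<open>\<rho>\<close>. Iterating the
  quasi-triangle inequality bounds \<open>\<rho>\<close> of the partial sums of \<open>\<Sum>\<^sub>n (2\<kappa>)\<^sup>-\<^sup>n h\<^sub>n\<close> by \<open>2\<kappa>\<close>, so by the
  weak Fatou property the whole series has finite \<open>\<rho>\<close>, hence finite \<open>lam\<close>; but it dominates each
  term \<open>(2\<kappa>)\<^sup>-\<^sup>n h\<^sub>n\<close>, whose \<open>lam\<close> exceeds \<open>n\<close>.\<close>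

lemma function_quasi_norm_scale:
  assumes "function_quasi_norm M \<rho>" "f \<in> borel_measurable M" "t \<ge> 0"
  shows "\<rho> (\<lambda>x. ennreal t * f x) = ennreal t * \<rho> f"
  using assms(1)[unfolded function_quasi_norm_def, THEN conjunct1] assms(2,3) by simp

lemma function_quasi_norm_mono:
  assumes "function_quasi_norm M \<rho>" "f \<in> borel_measurable M" "g \<in> borel_measurable M"
    and "\<And>x. f x \<le> g x"
  shows "\<rho> f \<le> \<rho> g"
  using assms(1)[unfolded function_quasi_norm_def, THEN conjunct2, THEN conjunct1] assms(2-4)
  by simp

lemma function_quasi_norm_zero:
  assumes "function_quasi_norm M \<rho>"
  shows "\<rho> (\<lambda>x. 0) = 0"
  using function_quasi_norm_scale[OF assms, of "\<lambda>x. 0" 0] by simp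

lemma function_quasi_norm_le_suminf:
  assumes "function_quasi_norm M \<rho>" "\<And>k. u k \<in> borel_measurable M"
  shows "\<rho> (u n) \<le> \<rho> (\<lambda>x. \<Sum>k. u k x)"
proof (rule function_quasi_norm_mono[OF assms])
  show "(\<lambda>x. \<Sum>k. u k x) \<in> borel_measurable M"
    using assms(2) by measurable
  show "u n x \<le> (\<Sum>k. u k x)" for x
    using sum_le_suminf[of "\<lambda>k. u k x" "{n}"] by simp
qed

definition quasi_triangle :: "'a measure \<Rightarrow> (('a \<Rightarrow> ennreal) \<Rightarrow> ennreal) \<Rightarrow> real \<Rightarrow> bool" where
  "quasi_triangle M \<rho> \<kappa> \<longleftrightarrow> (\<forall>f \<in> borel_measurable M. \<forall>g \<in> borel_measurable M.
     \<rho> (\<lambda>x. f x + g x) \<le> ennreal \<kappa> * (\<rho> f + \<rho> g))"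

lemma quasi_triangleD:
  assumes "quasi_triangle M \<rho> \<kappa>" "f \<in> borel_measurable M" "g \<in> borel_measurable M"
  shows "\<rho> (\<lambda>x. f x + g x) \<le> ennreal \<kappa> * (\<rho> f + \<rho> g)"
  using assms unfolding quasi_triangle_def by blast

lemma function_quasi_norm_quasi_triangle:
  assumes "function_quasi_norm M \<rho>"
  obtains \<kappa> :: real where "\<kappa> \<ge> 1" "quasi_triangle M \<rho> \<kappa>"
proof -
  from assms[unfolded function_quasi_norm_def, THEN conjunct2, THEN conjunct2, THEN conjunct2,
      THEN conjunct2]
  obtain k :: real where "quasi_triangle M \<rho> k"
    unfolding quasi_triangle_def ..
  moreover have "ennreal k * (\<rho> f + \<rho> g) \<le> ennreal (max k 1) * (\<rho> f + \<rho> g)" for f g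
    by (intro mult_right_mono ennreal_leI) auto
  ultimately have "quasi_triangle M \<rho> (max k 1)"
    unfolding quasi_triangle_def by (meson order.trans)
  then show thesis
    by (intro that[of "max k 1"]) auto
qed

lemma quasi_triangle_sum_le:
  assumes "function_quasi_norm M \<rho>" "quasi_triangle M \<rho> \<kappa>" "\<kappa> \<ge> 0"
    and "\<And>k. u k \<in> borel_measurable M"
  shows "\<rho> (\<lambda>x. \<Sum>k<N. u k x) \<le> (\<Sum>k<N. ennreal (\<kappa> ^ Suc k) * \<rho> (u k))"
  using assms(4)
proof (induction N arbitrary: u)
  case 0
  then show ?case using function_quasi_norm_zero[OF assms(1)] by simp
next
  case (Suc N)
  have "\<rho> (\<lambda>x. \<Sum>k<Suc N. u k x) = \<rho> (\<lambda>x. u 0 x + (\<Sum>k<N. u (Suc k) x))"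
    by (simp only: sum.lessThan_Suc_shift)
  also have "\<dots> \<le> ennreal \<kappa> * (\<rho> (u 0) + \<rho> (\<lambda>x. \<Sum>k<N. u (Suc k) x))"
    using Suc.prems by (intro quasi_triangleD[OF assms(2)] borel_measurable_sum) auto
  also have "\<dots> \<le> ennreal \<kappa> * (\<rho> (u 0) + (\<Sum>k<N. ennreal (\<kappa> ^ Suc k) * \<rho> (u (Suc k))))"
    using Suc.prems by (intro mult_left_mono add_left_mono Suc.IH) auto
  also have "\<dots> = ennreal (\<kappa> ^ 1) * \<rho> (u 0)
      + (\<Sum>k<N. ennreal (\<kappa> ^ Suc (Suc k)) * \<rho> (u (Suc k)))"
    using \<open>\<kappa> \<ge> 0\<close> by (simp add: distrib_left sum_distrib_left mult.assoc ennreal_mult)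
  also have "\<dots> = (\<Sum>k<Suc N. ennreal (\<kappa> ^ Suc k) * \<rho> (u k))"
    by (subst sum.lessThan_Suc_shift) simp
  finally show ?case .
qed

lemma weak_Fatou_suminf_less_top:
  assumes "function_quasi_norm M \<rho>" "weak_Fatou M \<rho>" "quasi_triangle M \<rho> \<kappa>" "\<kappa> \<ge> 0"
    and u: "\<And>k. u k \<in> borel_measurable M"
    and series_finite: "(\<Sum>k. ennreal (\<kappa> ^ Suc k) * \<rho> (u k)) < \<infinity>"
  shows "\<rho> (\<lambda>x. \<Sum>k. u k x) < \<infinity>"
proof -
  define S where "S N x = (\<Sum>k<N. u k x)" for N x
  have S_measurable: "S N \<in> borel_measurable M" for N
    unfolding S_def using u by (intro borel_measurable_sum) auto
  have "\<rho> (S N) \<le> (\<Sum>k. ennreal (\<kappa> ^ Suc k) * \<rho> (u k))" for N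
  proof -
    have "\<rho> (S N) \<le> (\<Sum>k<N. ennreal (\<kappa> ^ Suc k) * \<rho> (u k))"
      unfolding S_def using assms(1,3,4) u by (rule quasi_triangle_sum_le)
    also have "\<dots> \<le> (\<Sum>k. ennreal (\<kappa> ^ Suc k) * \<rho> (u k))"
      by (intro sum_le_suminf summableI) auto
    finally show ?thesis .
  qed
  then have "(SUP N. \<rho> (S N)) < \<infinity>"
    using series_finite by (meson SUP_least le_less_trans)
  moreover have "AE x in M. S N x \<le> S (Suc N) x" for N
    by (simp add: S_def)
  ultimately have "\<rho> (\<lambda>x. SUP N. S N x) < \<infinity>"
    using \<open>weak_Fatou M \<rho>\<close> S_measurable unfolding weak_Fatou_def by blast
  then show ?thesis
    by (simp add: S_def suminf_eq_SUP)
qed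

lemma weak_Fatou_geometric_series_less_top:
  assumes "function_quasi_norm M \<rho>" "weak_Fatou M \<rho>" "quasi_triangle M \<rho> \<kappa>" "\<kappa> > 0"
    and h_measurable: "\<And>n. h n \<in> borel_measurable M"
    and \<rho>_h: "\<And>n. \<rho> (h n) \<le> 1"
  shows "\<rho> (\<lambda>x. \<Sum>n. ennreal ((1 / (2 * \<kappa>)) ^ n) * h n x) < \<infinity>"
proof -
  define q where "q = 1 / (2 * \<kappa>)"
  have "q \<ge> 0" "\<kappa> * q = 1 / 2"
    using \<open>\<kappa> > 0\<close> by (simp_all add: q_def)
  have "ennreal (\<kappa> ^ Suc n) * \<rho> (\<lambda>x. ennreal (q ^ n) * h n x) \<le> ennreal (\<kappa> * (1 / 2) ^ n)" for n
  proof -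
    have "ennreal (\<kappa> ^ Suc n) * \<rho> (\<lambda>x. ennreal (q ^ n) * h n x)
        = ennreal (\<kappa> ^ Suc n) * (ennreal (q ^ n) * \<rho> (h n))"
      using \<open>q \<ge> 0\<close> by (simp add: function_quasi_norm_scale[OF assms(1) h_measurable])
    also have "\<dots> \<le> ennreal (\<kappa> ^ Suc n) * (ennreal (q ^ n) * 1)"
      by (intro mult_left_mono \<rho>_h) auto
    also have "\<dots> = ennreal (\<kappa> * (\<kappa> * q) ^ n)"
      using \<open>\<kappa> > 0\<close> \<open>q \<ge> 0\<close> by (simp add: power_mult_distrib mult.assoc flip: ennreal_mult)
    finally show ?thesis
      unfolding \<open>\<kappa> * q = 1 / 2\<close> .
  qed
  then have "(\<Sum>n. ennreal (\<kappa> ^ Suc n) * \<rho> (\<lambda>x. ennreal (q ^ n) * h n x))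
      \<le> (\<Sum>n. ennreal (\<kappa> * (1 / 2) ^ n))"
    by (intro suminf_le summableI)
  also have "\<dots> < \<infinity>"
    using \<open>\<kappa> > 0\<close> by (simp add: less_top ennreal_suminf_neq_top summable_mult summable_geometric)
  finally show ?thesis
    unfolding q_def[symmetric] using assms(1-4) h_measurable
    by (intro weak_Fatou_suminf_less_top) auto
qed

lemma dominates_less_top:
  assumes "dominates M \<rho> lam" "f \<in> borel_measurable M" "\<rho> f < \<infinity>"
  shows "lam f < \<infinity>"
proof -
  obtain C :: real where "lam f \<le> ennreal C * \<rho> f"
    using assms(1,2) unfolding dominates_def by blast
  also have "\<dots> < \<infinity>"
    using assms(3) by (simp add: ennreal_mult_less_top)
  finally show ?thesis .
qed

lemma unit_ball_bound_scale:
  assumes lam: "function_quasi_norm M lam" and \<rho>: "function_quasi_norm M \<rho>"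
    and bound: "\<And>f. f \<in> borel_measurable M \<Longrightarrow> \<rho> f \<le> 1 \<Longrightarrow> lam f \<le> ennreal C"
    and f: "f \<in> borel_measurable M" and s: "s > 0" "\<rho> f \<le> ennreal s"
  shows "lam f \<le> ennreal C * ennreal s"
proof -
  define h where "h x = ennreal (1 / s) * f x" for x
  have h_measurable: "h \<in> borel_measurable M"
    unfolding h_def using f by measurable
  have "\<rho> h = ennreal (1 / s) * \<rho> f"
    unfolding h_def using function_quasi_norm_scale[OF \<rho> f] s by simp
  also have "\<dots> \<le> ennreal (1 / s) * ennreal s"
    using s by (intro mult_left_mono) auto
  also have "\<dots> = 1"
    using s by (simp flip: ennreal_mult)
  finally have "lam h \<le> ennreal C"
    by (rule bound[OF h_measurable])
  have "ennreal s * ennreal (1 / s) = 1"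
    using s by (simp flip: ennreal_mult)
  then have "f = (\<lambda>x. ennreal s * h x)"
    by (simp add: h_def fun_eq_iff flip: mult.assoc)
  then have "lam f = ennreal s * lam h"
    using function_quasi_norm_scale[OF lam h_measurable, of s] s by simp
  also have "\<dots> \<le> ennreal s * ennreal C"
    by (intro mult_left_mono \<open>lam h \<le> ennreal C\<close>) auto
  finally show ?thesis
    by (simp add: mult.commute)
qed

lemma unit_ball_bound_imp_dominates:
  assumes lam: "function_quasi_norm M lam" and \<rho>: "function_quasi_norm M \<rho>"
    and bound: "\<And>f. f \<in> borel_measurable M \<Longrightarrow> \<rho> f \<le> 1 \<Longrightarrow> lam f \<le> ennreal C"
  shows "dominates M \<rho> lam"
proof -
  define C' where "C' = max C 1"
  have "C' > 0"
    by (simp add: C'_def)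
  have bound': "lam f \<le> ennreal C'" if "f \<in> borel_measurable M" "\<rho> f \<le> 1" for f
    using bound[OF that] by (rule order.trans) (simp add: C'_def ennreal_leI)
  have "lam f \<le> ennreal C' * \<rho> f" if f: "f \<in> borel_measurable M" for f
  proof (cases "\<rho> f = \<infinity>")
    case True
    then show ?thesis
      using \<open>C' > 0\<close> by (simp add: ennreal_mult_top)
  next
    case False
    then obtain r where r: "\<rho> f = ennreal r" "r \<ge> 0"
      by (cases "\<rho> f") auto
    show ?thesis
    proof (rule ennreal_le_epsilon)
      fix e :: real assume "e > 0"
      have "lam f \<le> ennreal C' * ennreal (r + e / C')"
        using r \<open>e > 0\<close> \<open>C' > 0\<close>
        by (intro unit_ball_bound_scale[OF lam \<rho> bound' f]) (auto intro: ennreal_leI add_nonneg_pos)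
      also have "\<dots> = ennreal (C' * (r + e / C'))"
        using r \<open>e > 0\<close> \<open>C' > 0\<close> by (intro ennreal_mult[symmetric]) auto
      also have "C' * (r + e / C') = C' * r + e"
        using \<open>C' > 0\<close> by (simp add: distrib_left)
      also have "\<dots> = ennreal C' * \<rho> f + ennreal e"
        using r \<open>e > 0\<close> \<open>C' > 0\<close> by (simp add: ennreal_mult)
      finally show "lam f \<le> ennreal C' * \<rho> f + ennreal e" .
    qed
  qed
  then show ?thesis
    unfolding dominates_def by blast
qed

lemma unit_ball_bound_if_finite_subset:
  assumes lam: "function_quasi_norm M lam" and \<rho>: "function_quasi_norm M \<rho>"
    and Fatou: "weak_Fatou M \<rho>"
    and subset: "{f \<in> borel_measurable M. \<rho> f < \<infinity>} \<subseteq> {f \<in> borel_measurable M. lam f < \<infinity>}"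
  obtains C :: real where "\<And>f. f \<in> borel_measurable M \<Longrightarrow> \<rho> f \<le> 1 \<Longrightarrow> lam f \<le> ennreal C"
proof -
  have "\<exists>C::real. \<forall>f \<in> borel_measurable M. \<rho> f \<le> 1 \<longrightarrow> lam f \<le> ennreal C"
  proof (rule ccontr)
    assume unbounded: "\<nexists>C::real. \<forall>f \<in> borel_measurable M. \<rho> f \<le> 1 \<longrightarrow> lam f \<le> ennreal C"
    obtain \<kappa> :: real where "\<kappa> \<ge> 1" "quasi_triangle M \<rho> \<kappa>"
      using function_quasi_norm_quasi_triangle[OF \<rho>] by blast
    have "\<exists>h. h \<in> borel_measurable M \<and> \<rho> h \<le> 1 \<and> ennreal (real n * (2 * \<kappa>) ^ n) < lam h" for n
      using unbounded by (force simp: not_le)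
    then obtain h where h_measurable: "\<And>n. h n \<in> borel_measurable M"
      and \<rho>_h: "\<And>n. \<rho> (h n) \<le> 1"
      and lam_h: "\<And>n. ennreal (real n * (2 * \<kappa>) ^ n) < lam (h n)"
      by metis
    define q where "q = 1 / (2 * \<kappa>)"
    have "q \<ge> 0" "2 * \<kappa> * q = 1"
      using \<open>\<kappa> \<ge> 1\<close> by (simp_all add: q_def)
    define u where "u n x = ennreal (q ^ n) * h n x" for n x
    have u_measurable: "u n \<in> borel_measurable M" for n
      unfolding u_def using h_measurable by measurable
    have lam_u: "ennreal (real n) \<le> lam (u n)" for n
    proof -
      have "q ^ n * (real n * (2 * \<kappa>) ^ n) = real n * (2 * \<kappa> * q) ^ n"
        by (simp add: power_mult_distrib)
      then have "ennreal (real n) = ennreal (q ^ n) * ennreal (real n * (2 * \<kappa>) ^ n)"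
        using \<open>q \<ge> 0\<close> \<open>\<kappa> \<ge> 1\<close> \<open>2 * \<kappa> * q = 1\<close> by (simp flip: ennreal_mult)
      also have "\<dots> \<le> ennreal (q ^ n) * lam (h n)"
        using lam_h[of n] by (intro mult_left_mono) auto
      also have "\<dots> = lam (u n)"
        unfolding u_def using \<open>q \<ge> 0\<close>
        by (intro function_quasi_norm_scale[OF lam h_measurable, symmetric]) simp
      finally show ?thesis .
    qed
    have "\<rho> (\<lambda>x. \<Sum>n. u n x) < \<infinity>"
      unfolding u_def q_def using \<rho> Fatou \<open>quasi_triangle M \<rho> \<kappa>\<close> \<open>\<kappa> \<ge> 1\<close> h_measurable \<rho>_h
      by (intro weak_Fatou_geometric_series_less_top) auto
    moreover have "(\<lambda>x. \<Sum>n. u n x) \<in> borel_measurable M"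
      using u_measurable by measurable
    ultimately have "lam (\<lambda>x. \<Sum>n. u n x) < \<infinity>"
      using subset by blast
    then obtain n :: nat where "lam (\<lambda>x. \<Sum>n. u n x) < of_nat n"
      using ennreal_Ex_less_of_nat by auto
    moreover have "lam (u n) \<le> lam (\<lambda>x. \<Sum>n. u n x)"
      using lam u_measurable by (rule function_quasi_norm_le_suminf)
    ultimately show False
      using lam_u[of n] by (simp add: ennreal_of_nat_eq_real_of_nat)
  qed
  then show thesis
    using that by blast
qed

theorem proposition3p16:
  fixes M :: "'a measure"
    and lam \<rho> :: "('a \<Rightarrow> ennreal) \<Rightarrow> ennreal"
  assumes "sigma_finite_measure M"
    and "function_quasi_norm M lam"
    and "function_quasi_norm M \<rho>"
    and "weak_Fatou M \<rho>"
  shows "dominates M \<rho> lam \<longleftrightarrow>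
         {f \<in> borel_measurable M. \<rho> f < \<infinity>} \<subseteq> {f \<in> borel_measurable M. lam f < \<infinity>}"
proof
  assume "dominates M \<rho> lam"
  then show "{f \<in> borel_measurable M. \<rho> f < \<infinity>} \<subseteq> {f \<in> borel_measurable M. lam f < \<infinity>}"
    using dominates_less_top by blast
next
  assume "{f \<in> borel_measurable M. \<rho> f < \<infinity>} \<subseteq> {f \<in> borel_measurable M. lam f < \<infinity>}"
  then obtain C :: real
    where "\<And>f. f \<in> borel_measurable M \<Longrightarrow> \<rho> f \<le> 1 \<Longrightarrow> lam f \<le> ennreal C"
    by (rule unit_ball_bound_if_finite_subset[OF assms(2-4)]) blast
  then show "dominates M \<rho> lam"
    by (rule unit_ball_bound_imp_dominates[OF assms(2,3)])
qed

end
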